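(* Let $V$ be a finite totally ordered set and let $w_1, w_2$ be derangements of $V$ each having exactly $k$ disjoint cycles. If $\theta(w_1) \le \theta(w_2)$ in the componentwise (cartesian product) order on $(\mathbb{Z}_+)^{|V|-k}$, then $f(w_1) \le f(w_2)$ and $r(w_1) \le r(w_2)$.
   Context: A derangement of $V$ is a fixed-point-free permutation of $V$. For a permutation $w$ of $V$ and $t \in V$, define $\rho_w(t) = \{t, w(t), \ldots, w^{k-1}(t)\}$, where $k$ is the smallest positive integer with $w^k(t) \le t$, and define $\lambda_w(t) = w^{-\ell}(t)$, where $\ell$ is the smallest positive integer with $w^{-\ell}(t) \le t$. Let $U(w)$ be the set of elements of $V$ that are not minimal in their $w$-cycle (so $|U(w)| = |V| - k$ if $w$ has $k$ cycles). $\theta(w) \in (\mathbb{Z}_+)^{|V|-k}$ is the tuple of the numbers $|\rho_w(t)|$ for $t \in U(w)$ (with multiplicity), listed in non-decreasing order. For a simple graph $G$ with vertex set $V$, the derangement set $\mathcal{D}(G)$ is the set of permutations $w$ of $V$ such that for every vertex $t$, $\lambda_w(t)$ is adjacent in $G$ to some vertex of $\rho_w(t)$. The frequency $f(w)$ is the number of simple graphs $G$ on vertex set $V$ with $w \in \mathcal{D}(G)$, and the rate is $r(w) = f(w)/2^{\binom{|V|}{2}}$. *)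

theory Defs
  imports Complex_Main "HOL-Combinatorics.Permutations"
begin

definition derangement :: "'a set \<Rightarrow> ('a \<Rightarrow> 'a) \<Rightarrow> bool" where
  "derangement V w \<longleftrightarrow> w permutes V \<and> (\<forall>x\<in>V. w x \<noteq> x)"

definition wcycle :: "('a \<Rightarrow> 'a) \<Rightarrow> 'a \<Rightarrow> 'a set" where
  "wcycle w t = {(w ^^ n) t | n. True}"

definition num_cycles :: "'a set \<Rightarrow> ('a \<Rightarrow> 'a) \<Rightarrow> nat" where
  "num_cycles V w = card (wcycle w ` V)"

definition rho_len :: "('a::linorder \<Rightarrow> 'a) \<Rightarrow> 'a \<Rightarrow> nat" where
  "rho_len w t = (LEAST k. 0 < k \<and> (w ^^ k) t \<le> t)"

definition rho :: "('a::linorder \<Rightarrow> 'a) \<Rightarrow> 'a \<Rightarrow> 'a set" where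
  "rho w t = {(w ^^ i) t | i. i < rho_len w t}"

definition lam :: "('a::linorder \<Rightarrow> 'a) \<Rightarrow> 'a \<Rightarrow> 'a" where
  "lam w t = (inv w ^^ (LEAST l. 0 < l \<and> (inv w ^^ l) t \<le> t)) t"

definition Uset :: "'a::linorder set \<Rightarrow> ('a \<Rightarrow> 'a) \<Rightarrow> 'a set" where
  "Uset V w = {t\<in>V. \<exists>s\<in>wcycle w t. s < t}"

definition theta :: "'a::linorder set \<Rightarrow> ('a \<Rightarrow> 'a) \<Rightarrow> nat list" where
  "theta V w = sort (map (\<lambda>t. card (rho w t)) (sorted_list_of_set (Uset V w)))"

definition simple_graphs :: "'a set \<Rightarrow> 'a set set set" where
  "simple_graphs V = Pow {e. e \<subseteq> V \<and> card e = 2}"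

definition adj :: "'a set set \<Rightarrow> 'a \<Rightarrow> 'a \<Rightarrow> bool" where
  "adj E u v \<longleftrightarrow> {u, v} \<in> E"

definition in_derangement_set :: "'a::linorder set \<Rightarrow> 'a set set \<Rightarrow> ('a \<Rightarrow> 'a) \<Rightarrow> bool" where
  "in_derangement_set V E w \<longleftrightarrow> w permutes V \<and>
     (\<forall>t\<in>V. \<exists>x\<in>rho w t. adj E (lam w t) x)"

definition freq :: "'a::linorder set \<Rightarrow> ('a \<Rightarrow> 'a) \<Rightarrow> nat" where
  "freq V w = card {E \<in> simple_graphs V. in_derangement_set V E w}"

definition rate :: "'a::linorder set \<Rightarrow> ('a \<Rightarrow> 'a) \<Rightarrow> real" where
  "rate V w = real (freq V w) / 2 ^ (card V choose 2)"

end

theory Submission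
  imports Defs "HOL-Combinatorics.Orbits" "HOL-Library.Disjoint_Sets"
begin

(* For a derangement w, the requirement of D(G) at the minimum t of a cycle is implied by the
   one at w t, since lambda_w(w t) = t = lambda_w(t) and rho_w(w t) is contained in rho_w(t).
   For t in U(w) the requirement says that G contains one of the |rho_w(t)| edges joining
   lambda_w(t) to rho_w(t). These edge sets are pairwise disjoint: the edge {lambda_w(t), x}
   determines the w-arc from lambda_w(t) to x, and t is the least vertex on it. Hence
   f(w) = 2^(|V| choose 2) * prod_{t in U(w)} (1 - 2^-|rho_w(t)|), which is monotone in theta(w). *)

lemma real_card_subsets_meeting_disjoint_family:
  fixes A :: "'i \<Rightarrow> 'e set"
  assumes "finite I" "finite E" "\<And>i. i \<in> I \<Longrightarrow> A i \<subseteq> E" "disjoint_family_on A I"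
  shows "real (card {G. G \<subseteq> E \<and> (\<forall>i\<in>I. G \<inter> A i \<noteq> {})})
           = 2 ^ card E * (\<Prod>i\<in>I. 1 - 1 / 2 ^ card (A i))"
  using assms
proof (induction I arbitrary: E rule: finite_induct)
  case empty
  have "{G. G \<subseteq> E} = Pow E" by auto
  then show ?case using empty by (simp add: card_Pow)
next
  case (insert i I)
  define H where "H = {X. X \<subseteq> A i \<and> X \<noteq> {}}"
  define S where "S = {G. G \<subseteq> E - A i \<and> (\<forall>j\<in>I. G \<inter> A j \<noteq> {})}"
  have Ai: "A i \<subseteq> E"
    using insert.prems(2) by simp
  have fin_Ai: "finite (A i)"
    using Ai insert.prems(1) by (rule finite_subset)
  have "A j \<subseteq> E - A i" if "j \<in> I" for j
    using that insert.hyps(2) insert.prems(2,3) by (fastforce simp: disjoint_family_on_def)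
  moreover have "disjoint_family_on A I"
    using insert.prems(3) by (simp add: disjoint_family_on_def)
  ultimately have card_S: "real (card S) = 2 ^ card (E - A i) * (\<Prod>j\<in>I. 1 - 1 / 2 ^ card (A j))"
    unfolding S_def using insert.IH insert.prems(1) by blast
  have "H = Pow (A i) - {{}}" unfolding H_def by auto
  then have card_H: "real (card H) = 2 ^ card (A i) - 1"
    using fin_Ai by (simp add: card_Pow of_nat_diff)
  define T where "T = {G. G \<subseteq> E \<and> (\<forall>j\<in>insert i I. G \<inter> A j \<noteq> {})}"
  have split: "bij_betw (\<lambda>(X, Y). X \<union> Y) (H \<times> S) T"
  proof (rule bij_betwI[where g = "\<lambda>G. (G \<inter> A i, G - A i)"])
    show "(\<lambda>(X, Y). X \<union> Y) \<in> H \<times> S \<rightarrow> T"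
      using Ai unfolding H_def S_def T_def by blast
    show "(\<lambda>G. (G \<inter> A i, G - A i)) \<in> T \<rightarrow> H \<times> S"
      using \<open>\<And>j. j \<in> I \<Longrightarrow> A j \<subseteq> E - A i\<close> unfolding H_def S_def T_def by blast
  qed (auto simp: H_def S_def)
  have "real (card T) = real (card H) * real (card S)"
    using bij_betw_same_card[OF split] by (metis card_cartesian_product of_nat_mult)
  also have "\<dots> = (2 ^ card (A i) - 1) * 2 ^ (card E - card (A i)) * (\<Prod>j\<in>I. 1 - 1 / 2 ^ card (A j))"
    using card_H card_S Ai fin_Ai by (simp add: card_Diff_subset)
  also have "(2 ^ card (A i) - 1) * 2 ^ (card E - card (A i)) = (2::real) ^ card E * (1 - 1 / 2 ^ card (A i))"
    using card_mono[OF insert.prems(1) Ai] by (simp add: power_diff field_simps)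
  finally show ?case using insert.hyps by (simp add: T_def mult.assoc)
qed

lemma wcycle_eq_orbit: "permutation w \<Longrightarrow> wcycle w t = orbit w t"
  by (simp add: orbit_altdef_permutation wcycle_def)

lemma funpow_inv_in_wcycle:
  assumes "permutation w"
  shows "(inv w ^^ n) t \<in> wcycle w t"
  using orbit_altdef_permutation[OF permutation_inverse[OF assms]] orbit_inv_eq[OF assms]
  by (auto simp: wcycle_eq_orbit[OF assms, symmetric])

lemma
  assumes "permutation w"
  shows rho_len_pos: "0 < rho_len w t"
    and funpow_rho_len_le: "(w ^^ rho_len w t) t \<le> t"
    and less_funpow_below_rho_len: "0 < i \<Longrightarrow> i < rho_len w t \<Longrightarrow> t < (w ^^ i) t"
proof -
  obtain n where "n > 0" "(w ^^ n) t = t"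
    using permutation_self[OF assms] .
  then have ex: "\<exists>k. 0 < k \<and> (w ^^ k) t \<le> t" by auto
  show "0 < rho_len w t" "(w ^^ rho_len w t) t \<le> t"
    using LeastI_ex[OF ex] unfolding rho_len_def by auto
  show "0 < i \<Longrightarrow> i < rho_len w t \<Longrightarrow> t < (w ^^ i) t"
    using not_less_Least[of i "\<lambda>k. 0 < k \<and> (w ^^ k) t \<le> t"] unfolding rho_len_def by auto
qed

lemma le_of_mem_rho:
  assumes "permutation w" "x \<in> rho w t"
  shows "t \<le> x"
proof -
  obtain i where "x = (w ^^ i) t" "i < rho_len w t"
    using assms(2) unfolding rho_def by blast
  then show ?thesis
    using less_funpow_below_rho_len[OF assms(1), of i t] by (cases "i = 0") auto
qed

lemma lam_eq_funpow_inv: "lam w t = (inv w ^^ rho_len (inv w) t) t"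
  unfolding lam_def rho_len_def ..

lemma lam_le: "permutation w \<Longrightarrow> lam w t \<le> t"
  using funpow_rho_len_le[OF permutation_inverse] by (simp add: lam_eq_funpow_inv)

lemma funpow_lam:
  assumes "permutation w" "j \<le> rho_len (inv w) t"
  shows "(w ^^ j) (lam w t) = (inv w ^^ (rho_len (inv w) t - j)) t"
proof -
  have "lam w t = (inv w ^^ (j + (rho_len (inv w) t - j))) t"
    using assms(2) by (simp add: lam_eq_funpow_inv)
  then have "lam w t = (inv w ^^ j) ((inv w ^^ (rho_len (inv w) t - j)) t)"
    by (simp only: funpow_add comp_apply)
  then show ?thesis
    using fn_o_inv_fn_is_id[OF permutation_bijective[OF assms(1)], of j] by (metis comp_apply)
qed

lemma lam_less:
  assumes "permutation w" "t \<in> Uset V w"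
  shows "lam w t < t"
proof (rule ccontr)
  assume "\<not> lam w t < t"
  then have lam_t: "lam w t = t"
    using lam_le[OF assms(1), of t] by simp
  define q where "q = rho_len (inv w) t"
  have inv: "permutation (inv w)"
    using assms(1) by (rule permutation_inverse)
  have "0 < q"
    using rho_len_pos[OF inv] q_def by simp
  have period: "(w ^^ q) t = t"
    using funpow_lam[OF assms(1), of q t] lam_t q_def by simp
  \<comment> \<open>Going forward from t within one period is going backward from t, which stays above t.\<close>
  have "t \<le> (w ^^ r) t" if "r < q" for r
  proof (cases "r = 0")
    case False
    then show ?thesis
      using funpow_lam[OF assms(1), of r t] lam_t that
        less_funpow_below_rho_len[OF inv, of "q - r" t] q_def by simp
  qed simp
  then have "t \<le> s" if "s \<in> wcycle w t" for s
    using that orbit_altdef_bounded[OF period \<open>0 < q\<close>] wcycle_eq_orbit[OF assms(1)] by auto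
  then show False
    using assms(2) unfolding Uset_def by force
qed

lemma rho_arc:
  assumes "permutation w" "x \<in> rho w t"
  obtains m q where "0 < q" "q \<le> m" "(w ^^ q) (lam w t) = t" "(w ^^ m) (lam w t) = x"
    "\<And>j. 0 < j \<Longrightarrow> j \<le> m \<Longrightarrow> t \<le> (w ^^ j) (lam w t)"
proof -
  define q where "q = rho_len (inv w) t"
  have inv: "permutation (inv w)"
    using assms(1) by (rule permutation_inverse)
  obtain i where i: "x = (w ^^ i) t" "i < rho_len w t"
    using assms(2) unfolding rho_def by blast
  have "0 < q"
    using rho_len_pos[OF inv] q_def by simp
  have to_t: "(w ^^ q) (lam w t) = t"
    using funpow_lam[OF assms(1), of q t] q_def by simp
  then have to_x: "(w ^^ (i + q)) (lam w t) = x"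
    using i(1) by (simp add: funpow_add)
  have "t \<le> (w ^^ j) (lam w t)" if "0 < j" "j \<le> i + q" for j
  proof (cases "j \<le> q")
    case True
    then show ?thesis
      using funpow_lam[OF assms(1), of j t] less_funpow_below_rho_len[OF inv, of "q - j" t] that(1)
      by (cases "j = q") (auto simp: q_def)
  next
    case False
    then have "(w ^^ j) (lam w t) = (w ^^ (j - q)) t"
      using to_t by (metis funpow_add comp_apply le_add_diff_inverse2 nle_le)
    moreover have "j - q < rho_len w t"
      using that(2) i(2) by linarith
    ultimately show ?thesis
      using less_funpow_below_rho_len[OF assms(1), of "j - q" t] False by simp
  qed
  then show thesis
    using that[OF \<open>0 < q\<close> _ to_t to_x] by simp
qed

lemma funpow_eq_funpow_imp_eq:
  assumes "inj f" "(f ^^ m) a = (f ^^ n) a" "\<And>j. 0 < j \<Longrightarrow> j \<le> max m n \<Longrightarrow> (f ^^ j) a \<noteq> a"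
  shows "m = n"
proof -
  have diff_fixes: "(f ^^ (l - k)) a = a" if "(f ^^ k) a = (f ^^ l) a" for k l
  proof (cases "k \<le> l")
    case True
    then have "(f ^^ k) ((f ^^ (l - k)) a) = (f ^^ k) a"
      using that by (metis funpow_add comp_apply le_add_diff_inverse)
    then show ?thesis
      using inj_fn[OF assms(1)] by (simp add: inj_eq)
  qed simp
  have "(f ^^ (n - m)) a = a" "(f ^^ (m - n)) a = a"
    using diff_fixes assms(2) by auto
  then have "\<not> m < n" "\<not> n < m"
    using assms(3)[of "n - m"] assms(3)[of "m - n"] by (auto simp: le_max_iff_disj)
  then show ?thesis by simp
qed

definition lam_edges :: "('a::linorder \<Rightarrow> 'a) \<Rightarrow> 'a \<Rightarrow> 'a set set" where
  "lam_edges w t = (\<lambda>x. {lam w t, x}) ` rho w t"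

lemma lam_less_of_mem_rho:
  "permutation w \<Longrightarrow> t \<in> Uset V w \<Longrightarrow> x \<in> rho w t \<Longrightarrow> lam w t < x"
  using lam_less le_of_mem_rho less_le_trans by blast

lemma lam_edges_disjoint:
  assumes "permutation w" "t \<in> Uset V w" "t' \<in> Uset V w" "t \<noteq> t'"
  shows "lam_edges w t \<inter> lam_edges w t' = {}"
proof (rule ccontr)
  assume "lam_edges w t \<inter> lam_edges w t' \<noteq> {}"
  then obtain x x' where x: "x \<in> rho w t" and x': "x' \<in> rho w t'"
    and edge: "{lam w t, x} = {lam w t', x'}"
    unfolding lam_edges_def by blast
  define a where "a = lam w t"
  have "a < t" "lam w t' < t'" "a < x" "lam w t' < x'"
    using lam_less[OF assms(1)] lam_less_of_mem_rho[OF assms(1)] assms(2,3) x x' a_def by blast+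
  then have a': "lam w t' = a" and "x' = x"
    using edge a_def by (auto simp: doubleton_eq_iff)
  obtain m q where q: "(w ^^ q) a = t" "0 < q" "q \<le> m" and m: "(w ^^ m) a = x"
    and above_t: "\<And>j. 0 < j \<Longrightarrow> j \<le> m \<Longrightarrow> t \<le> (w ^^ j) a"
    using rho_arc[OF assms(1) x] unfolding a_def by metis
  obtain m' q' where q': "(w ^^ q') a = t'" "0 < q'" "q' \<le> m'" and m': "(w ^^ m') a = x"
    and above_t': "\<And>j. 0 < j \<Longrightarrow> j \<le> m' \<Longrightarrow> t' \<le> (w ^^ j) a"
    using rho_arc[OF assms(1) x'] unfolding a' \<open>x' = x\<close> by metis
  \<comment> \<open>Both arcs leave a and reach x without returning to a, so they coincide.\<close>
  have "m = m'"
  proof (rule funpow_eq_funpow_imp_eq[OF bij_is_inj[OF permutation_bijective[OF assms(1)]]])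
    show "(w ^^ m) a = (w ^^ m') a"
      using m m' by simp
    show "(w ^^ j) a \<noteq> a" if "0 < j" "j \<le> max m m'" for j
      using that above_t[of j] above_t'[of j] \<open>a < t\<close> \<open>lam w t' < t'\<close> a' by (cases "j \<le> m") (auto simp: le_max_iff_disj)
  qed
  then have "t \<le> t'" "t' \<le> t"
    using above_t[of q'] above_t'[of q] q q' by auto
  then show False
    using assms(4) by simp
qed

lemma rho_succ_subset:
  assumes "permutation w" "t < w t"
  shows "rho w (w t) \<subseteq> rho w t"
proof -
  define p where "p = rho_len w t"
  have "p \<noteq> 1"
    using funpow_rho_len_le[OF assms(1), of t] assms(2) p_def by auto
  then have "2 \<le> p"
    using rho_len_pos[OF assms(1), of t] p_def by simp
  then have "(w ^^ (p - 1)) (w t) = (w ^^ p) t"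
    by (metis Suc_diff_1 funpow_Suc_right comp_apply less_le_trans pos2)
  then have "0 < p - 1 \<and> (w ^^ (p - 1)) (w t) \<le> w t"
    using funpow_rho_len_le[OF assms(1), of t] assms(2) \<open>2 \<le> p\<close> p_def by simp
  then have "rho_len w (w t) \<le> p - 1"
    unfolding rho_len_def by (rule Least_le)
  then have "rho_len w (w t) < p"
    using \<open>2 \<le> p\<close> by simp
  show ?thesis
  proof
    fix x assume "x \<in> rho w (w t)"
    then obtain i where "x = (w ^^ i) (w t)" "i < rho_len w (w t)"
      unfolding rho_def by blast
    then have "x = (w ^^ Suc i) t" "Suc i < rho_len w t"
      using \<open>rho_len w (w t) < p\<close> p_def by (simp_all add: funpow_swap1)
    then show "x \<in> rho w t"
      unfolding rho_def by blast
  qed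
qed

lemma minimum_of_wcycle:
  assumes "w permutes V" "finite V" "w t \<noteq> t" "t \<in> V" "t \<notin> Uset V w"
  shows "w t \<in> Uset V w" "lam w (w t) = lam w t" "rho w (w t) \<subseteq> rho w t"
proof -
  have perm: "permutation w"
    using assms(1,2) by (rule permutes_imp_permutation[rotated])
  have min: "t \<le> s" if "s \<in> wcycle w t" for s
    using assms(4,5) that unfolding Uset_def by force
  have "w t \<in> wcycle w t"
    unfolding wcycle_def by (auto intro!: exI[of _ 1])
  then have "t < w t"
    using min assms(3) by fastforce
  show "rho w (w t) \<subseteq> rho w t"
    using rho_succ_subset[OF perm \<open>t < w t\<close>] .
  have inv_wt: "inv w (w t) = t"
    using permutes_inverses(2)[OF assms(1)] .
  have "t \<in> wcycle w (w t)"
    using funpow_inv_in_wcycle[OF perm, of 1 "w t"] inv_wt by simp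
  then show "w t \<in> Uset V w"
    using \<open>t < w t\<close> permutes_in_image[OF assms(1)] assms(4) unfolding Uset_def by blast
  have "rho_len (inv w) (w t) = 1"
    unfolding rho_len_def by (rule Least_equality) (use inv_wt \<open>t < w t\<close> in auto)
  then have "lam w (w t) = t"
    using inv_wt by (simp add: lam_eq_funpow_inv)
  moreover have "lam w t = t"
    using min funpow_inv_in_wcycle[OF perm] lam_le[OF perm, of t]
    by (metis lam_eq_funpow_inv order_antisym)
  ultimately show "lam w (w t) = lam w t"
    by simp
qed

lemma in_derangement_set_iff:
  assumes "derangement V w" "finite V"
  shows "in_derangement_set V G w \<longleftrightarrow> (\<forall>t\<in>Uset V w. G \<inter> lam_edges w t \<noteq> {})"
proof -
  have perm: "w permutes V" and fixfree: "\<And>t. t \<in> V \<Longrightarrow> w t \<noteq> t"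
    using assms(1) unfolding derangement_def by auto
  have meets: "(\<exists>x\<in>rho w t. adj G (lam w t) x) \<longleftrightarrow> G \<inter> lam_edges w t \<noteq> {}" for t
    unfolding lam_edges_def adj_def by blast
  have "(\<forall>t\<in>V. \<exists>x\<in>rho w t. adj G (lam w t) x) \<longleftrightarrow> (\<forall>t\<in>Uset V w. \<exists>x\<in>rho w t. adj G (lam w t) x)"
  proof (intro iffI ballI)
    fix t assume all_U: "\<forall>t\<in>Uset V w. \<exists>x\<in>rho w t. adj G (lam w t) x" and "t \<in> V"
    show "\<exists>x\<in>rho w t. adj G (lam w t) x"
    proof (cases "t \<in> Uset V w")
      case False
      from minimum_of_wcycle[OF perm assms(2) fixfree[OF \<open>t \<in> V\<close>] \<open>t \<in> V\<close> False]
      show ?thesis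
        using all_U by (metis subsetD)
    qed (use all_U in blast)
  qed (auto simp: Uset_def)
  then show ?thesis
    unfolding in_derangement_set_def using perm meets by simp
qed

lemma lam_edges_subset:
  assumes "w permutes V" "finite V" "t \<in> Uset V w"
  shows "lam_edges w t \<subseteq> {e. e \<subseteq> V \<and> card e = 2}"
proof -
  have perm: "permutation w"
    using assms(1,2) by (rule permutes_imp_permutation[rotated])
  have "t \<in> V"
    using assms(3) unfolding Uset_def by simp
  then have "lam w t \<in> V" "rho w t \<subseteq> V"
    unfolding lam_eq_funpow_inv rho_def
    using permutes_in_funpow_image[OF permutes_inv[OF assms(1)]] permutes_in_funpow_image[OF assms(1)]
    by blast+
  then show ?thesis
    unfolding lam_edges_def using lam_less_of_mem_rho[OF perm assms(3)] by fastforce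
qed

lemma card_lam_edges:
  assumes "permutation w" "t \<in> Uset V w"
  shows "card (lam_edges w t) = card (rho w t)"
  unfolding lam_edges_def
proof (rule card_image, rule inj_onI)
  fix x y assume "x \<in> rho w t" "y \<in> rho w t" "{lam w t, x} = {lam w t, y}"
  then show "x = y"
    using lam_less_of_mem_rho[OF assms] by (auto simp: doubleton_eq_iff)
qed

lemma real_freq_eq:
  assumes "derangement V w" "finite V"
  shows "real (freq V w) = 2 ^ card {e. e \<subseteq> V \<and> card e = 2} * (\<Prod>t\<in>Uset V w. 1 - 1 / 2 ^ card (rho w t))"
proof -
  define K where "K = {e. e \<subseteq> V \<and> card e = 2}"
  have perm: "w permutes V"
    using assms(1) unfolding derangement_def by simp
  then have "permutation w"
    using assms(2) by (rule permutes_imp_permutation[rotated])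
  have "finite K"
    unfolding K_def using assms(2) by (simp add: finite_subset[of _ "Pow V"] subset_iff)
  have "finite (Uset V w)"
    using assms(2) unfolding Uset_def by simp
  have "freq V w = card {G. G \<subseteq> K \<and> (\<forall>t\<in>Uset V w. G \<inter> lam_edges w t \<noteq> {})}"
    unfolding freq_def simple_graphs_def K_def in_derangement_set_iff[OF assms] by (simp add: Pow_def)
  also have "real \<dots> = 2 ^ card K * (\<Prod>t\<in>Uset V w. 1 - 1 / 2 ^ card (lam_edges w t))"
    using \<open>finite (Uset V w)\<close> \<open>finite K\<close> lam_edges_subset[OF perm assms(2)]
      lam_edges_disjoint[OF \<open>permutation w\<close>]
    by (intro real_card_subsets_meeting_disjoint_family) (auto simp: K_def disjoint_family_on_def)
  finally show ?thesis
    using card_lam_edges[OF \<open>permutation w\<close>] unfolding K_def by simp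
qed

lemma prod_list_map_theta:
  assumes "finite V"
  shows "prod_list (map g (theta V w)) = (\<Prod>t\<in>Uset V w. g (card (rho w t)))"
proof -
  have "finite (Uset V w)"
    using assms unfolding Uset_def by simp
  have "prod_list (map g (theta V w)) = prod_mset (image_mset g (mset (theta V w)))"
    by (simp flip: prod_mset_prod_list)
  also have "\<dots> = prod_list (map (\<lambda>t. g (card (rho w t))) (sorted_list_of_set (Uset V w)))"
    by (simp add: theta_def prod_mset_prod_list comp_def flip: mset_map)
  also have "\<dots> = (\<Prod>t\<in>Uset V w. g (card (rho w t)))"
    using \<open>finite (Uset V w)\<close>
    by (metis prod.distinct_set_conv_list distinct_sorted_list_of_set set_sorted_list_of_set)
  finally show ?thesis .
qed

lemma prod_list_map_mono:
  fixes g :: "'a::order \<Rightarrow> 'b::linordered_semidom"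
  assumes "mono g" "\<And>x. 0 \<le> g x" "list_all2 (\<le>) xs ys"
  shows "prod_list (map g xs) \<le> prod_list (map g ys)"
  using assms(3)
proof (induction rule: list_all2_induct)
  case (Cons x xs y ys)
  have "0 \<le> prod_list (map g xs)"
    using assms(2) by (induction xs) simp_all
  then show ?case
    using Cons assms(2) monoD[OF assms(1)] by (simp add: mult_mono)
qed simp

lemma mono_one_minus_inverse_pow2: "mono (\<lambda>c::nat. 1 - 1 / 2 ^ c :: real)"
  by (rule monoI) (simp add: frac_le power_increasing)

theorem corollary3p8:
  fixes V :: "'a::linorder set" and w1 w2 :: "'a \<Rightarrow> 'a" and k :: nat
  assumes "finite V"
    and "derangement V w1" and "derangement V w2"
    and "num_cycles V w1 = k" and "num_cycles V w2 = k"
    and "list_all2 (\<le>) (theta V w1) (theta V w2)"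
  shows "freq V w1 \<le> freq V w2 \<and> rate V w1 \<le> rate V w2"
proof -
  have "0 \<le> (1 - 1 / 2 ^ c :: real)" for c :: nat
    by simp
  then have "prod_list (map (\<lambda>c. 1 - 1 / 2 ^ c :: real) (theta V w1))
      \<le> prod_list (map (\<lambda>c. 1 - 1 / 2 ^ c) (theta V w2))"
    using prod_list_map_mono[OF mono_one_minus_inverse_pow2 _ assms(6)] by blast
  then have "real (freq V w1) \<le> real (freq V w2)"
    unfolding real_freq_eq[OF assms(2,1)] real_freq_eq[OF assms(3,1)]
      prod_list_map_theta[OF assms(1), of "\<lambda>c. 1 - 1 / 2 ^ c", symmetric]
    by simp
  then show ?thesis
    unfolding rate_def by (simp add: divide_right_mono)
qed

end
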